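(* Let $D$ be a set, let $m \ge 1$, $e \ge k \ge 1$ be integers, and let $\Sigma = \mathbb{Z}_{2^{32}}^{2m}$. Let $J : D \to \Sigma^{e}$ be a map (an erasure code) with minimum distance $k$, i.e. for all $x \neq y$ in $D$, the sequences $J(x)$ and $J(y)$ differ in at least $k$ of their $e$ coordinates. For a key $s \in \mathbb{Z}_{2^{32}}^{2m}$ and $d \in \Sigma$ define $$\mathrm{NH}(s,d) = \sum_{i=0}^{m-1} (d_{2i} + s_{2i})(d_{2i+1} + s_{2i+1}) \in \mathbb{Z}_{2^{64}},$$ where each addition $d_j + s_j$ is computed in $\mathbb{Z}_{2^{32}}$ and the result is regarded as an integer in $[0,2^{32})$, while the products and the outer sum are computed in $\mathbb{Z}_{2^{64}}$. Let $T$ be a $k \times e$ matrix with integer entries, acting on $\mathbb{Z}_{2^{64}}^{e}$ by matrix multiplication over $\mathbb{Z}_{2^{64}}$. Assume that for every set $F$ of $k$ distinct column indices, the $k\times k$ submatrix $T|_F$ consisting of the columns of $T$ indexed by $F$ has integer determinant not divisible by $2^{64}$, and let $p$ be the largest integer such that $2^{p}$ divides $\det(T|_F)$ for some such $F$ (i.e. $p = \max_F \nu_2(\det T|_F)$). For keys $s = (s_1,\dots,s_e)$ with each $s_i \in \mathbb{Z}_{2^{32}}^{2m}$, define the EHC hash $$E(s,x) = T \cdot \big(\mathrm{NH}(s_1, J(x)_1), \dots, \mathrm{NH}(s_e, J(x)_e)\big)^{\top} \in \mathbb{Z}_{2^{64}}^{k}.$$ Then for all $x \neq y$ in $D$ and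 all $\delta \in \mathbb{Z}_{2^{64}}^{k}$, $$\Pr_s\big[E(s,x) - E(s,y) = \delta\big] \le 2^{k(p-32)},$$ where $s_1,\dots,s_e$ are chosen independently and uniformly at random from $\mathbb{Z}_{2^{32}}^{2m}$. That is, $E$ is $2^{k(p-32)}$-almost $\Delta$-universal.
   Context: A hash family $H$ (a map from seeds $S$ and domain $D$ to a codomain that is an abelian group) is $\varepsilon$-almost $\Delta$-universal if for all $x \neq y$ in $D$ and every $\delta$ in the codomain, $\Pr_{s \in S}[H(s,x) - H(s,y) = \delta] \le \varepsilon$, with $s$ uniform. $\nu_2(n)$ denotes the exponent of the largest power of $2$ dividing the nonzero integer $n$. This is the "generalized Encode, Hash, Combine" construction: encode with an erasure code of minimum distance $k$, hash each encoded coordinate with NH under independent keys, and combine with a fixed integer matrix over $\mathbb{Z}_{2^{64}}$. *)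

theory Defs
  imports "Jordan_Normal_Form.Determinant" "Jordan_Normal_Form.DL_Submatrix"
    "HOL-Library.FuncSet" "HOL-Computational_Algebra.Factorial_Ring"
begin

text \<open>Elements of Z_{2^32} and Z_{2^64} are represented by their canonical
 integer representatives in {0..<2^32} resp. {0..<2^64}.\<close>

definition words :: "nat \<Rightarrow> (nat \<Rightarrow> int) set" where
  "words m = {0..<2*m} \<rightarrow>\<^sub>E {0..<(2::int)^32}"

definition NH :: "nat \<Rightarrow> (nat \<Rightarrow> int) \<Rightarrow> (nat \<Rightarrow> int) \<Rightarrow> int" where
  "NH m s d = (\<Sum>i<m. ((d (2*i) + s (2*i)) mod 2^32) * ((d (2*i+1) + s (2*i+1)) mod 2^32))
              mod 2^64"

definition EHC :: "nat \<Rightarrow> int mat \<Rightarrow> ('d \<Rightarrow> nat \<Rightarrow> nat \<Rightarrow> int) \<Rightarrow> (nat \<Rightarrow> nat \<Rightarrow> int)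
                   \<Rightarrow> 'd \<Rightarrow> nat \<Rightarrow> int" where
  "EHC m T J s x i = (\<Sum>j<dim_col T. T $$ (i,j) * NH m (s j) (J x j)) mod 2^64"

definition keys :: "nat \<Rightarrow> nat \<Rightarrow> (nat \<Rightarrow> nat \<Rightarrow> int) set" where
  "keys m e = {0..<e} \<rightarrow>\<^sub>E words m"

end

theory Submission
  imports Defs "HOL-Computational_Algebra.Primes"
begin

(* Fix k positions F where the encodings of x and y differ.  For a colliding key, splitting the
   congruences T h = delta (mod 2^64) into the columns in F and the rest and multiplying by the
   adjugate of T|F gives det(T|F) h_j = a_j (mod 2^64) for each j in F, where h_j is the NH
   difference at position j and a_j depends only on the key words outside F.  Inside position j
   choose an index where the two encodings differ: as a function of the key entry paired with it
   in NH, h_j is injective modulo 2^64, so at most 2^v values of that entry survive, where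
   v = nu_2(det T|F) <= p.  Each of the k constrained entries ranges over 2^32 values, whence the
   bound 2^(k(v-32)). *)

lemma square_not_dvd_weighted_sum:
  fixes W a b c :: int
  assumes "0 < c" "c < W" "a \<in> {0..<W}" "b \<in> {0..<W}" "a \<noteq> b"
  shows "\<not> W^2 dvd a * c + b * (W - c)"
proof (rule zdvd_not_zless)
  have "a * c \<le> (W - 1) * c" "b * (W - c) \<le> (W - 1) * (W - c)"
    using assms by (auto intro: mult_right_mono)
  then show "a * c + b * (W - c) < W^2" using assms by (simp add: power2_eq_square algebra_simps)
  have "0 \<le> a * c" "0 \<le> b * (W - c)" using assms by auto
  moreover have "0 < a * c \<or> 0 < b * (W - c)" using assms by (auto simp: zero_less_mult_iff)
  ultimately show "0 < a * c + b * (W - c)" by linarith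
qed

lemma weighted_diff_square_dvd_imp_zero:
  fixes W A A' u u' :: int
  assumes A: "A \<in> {0..<W}" "A' \<in> {0..<W}" "A \<noteq> A'"
    and u: "\<bar>u\<bar> < W" "\<bar>u'\<bar> < W"
    and dvd_W: "W dvd u - u'" and dvd_W2: "W^2 dvd A * u - A' * u'"
  shows "u = 0"
proof -
  have W: "W > 0" using A by simp
  obtain q where q: "u - u' = W * q" using dvd_W by (auto elim: dvdE)
  have "\<bar>W * q\<bar> < W * 2" using u q by linarith
  then have "\<bar>q\<bar> < 2" using W by (simp add: abs_mult)
  then consider "q = 0" | "q = 1" | "q = -1" by linarith
  then show ?thesis
  proof cases
    case 1
    then have dvd: "W^2 dvd (A - A') * u" using q dvd_W2 by (simp add: algebra_simps)
    have less: "\<bar>(A - A') * u\<bar> < W^2"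
      unfolding abs_mult power2_eq_square using A u by (intro mult_strict_mono) auto
    have "(A - A') * u = 0"
      by (rule ccontr) (use dvd less dvd_imp_le_int[of "(A - A') * u" "W^2"] in auto)
    then show ?thesis using A by simp
  next
    case 2
    then have eq: "A * u - A' * u' = A * u + A' * (W - u)" and "0 < u"
      using q u by (auto simp: algebra_simps)
    have "W^2 dvd A * u + A' * (W - u)" using dvd_W2 unfolding eq .
    then show ?thesis using square_not_dvd_weighted_sum[of u W A A'] \<open>0 < u\<close> A u by auto
  next
    case 3
    then have eq: "A * u - A' * u' = - (A * (-u) + A' * (W - (-u)))" and "0 < -u"
      using q u by (auto simp: algebra_simps)
    have "W^2 dvd A * (-u) + A' * (W - (-u))" using dvd_W2 unfolding eq dvd_minus_iff .
    then show ?thesis using square_not_dvd_weighted_sum[of "-u" W A A'] \<open>0 < -u\<close> A u by auto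
  qed
qed

lemma weighted_shift_diff_inj_mod_square:
  fixes W A A' b b' y y' :: int
  assumes A: "A \<in> {0..<W}" "A' \<in> {0..<W}" "A \<noteq> A'"
    and y: "y \<in> {0..<W}" "y' \<in> {0..<W}"
    and dvd: "W^2 dvd (A * ((b + y) mod W) - A' * ((b' + y) mod W))
                     - (A * ((b + y') mod W) - A' * ((b' + y') mod W))"
  shows "y = y'"
proof -
  define u where "u = (b + y) mod W - (b + y') mod W"
  define u' where "u' = (b' + y) mod W - (b' + y') mod W"
  have W: "W > 0" using A by simp
  have "u mod W = (y - y') mod W" "u' mod W = (y - y') mod W"
    unfolding u_def u'_def by (simp_all add: mod_diff_eq)
  then have "W dvd u - u'" using mod_eq_dvd_iff by metis
  moreover have "W^2 dvd A * u - A' * u'"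
    using dvd unfolding u_def u'_def by (simp add: algebra_simps)
  moreover have "\<bar>u\<bar> < W" "\<bar>u'\<bar> < W"
    unfolding u_def u'_def abs_less_iff using W by (smt (verit) pos_mod_bound pos_mod_sign)+
  ultimately have "u = 0" using weighted_diff_square_dvd_imp_zero A by blast
  then have "W dvd y - y'" unfolding u_def by (simp add: mod_eq_dvd_iff)
  then have "y mod W = y' mod W" by (simp add: mod_eq_dvd_iff)
  then show ?thesis using y by simp
qed

lemma dvd_diff_diff_of_mod:
  fixes N a b c e :: int
  assumes "N dvd (a mod N - b mod N) - (c mod N - e mod N)"
  shows "N dvd (a - b) - (c - e)"
  using assms by (metis mod_diff_left_eq mod_diff_right_eq mod_eq_dvd_iff)

lemma card_solutions_dvd_mult_le:
  fixes q c a :: int and h :: "'a \<Rightarrow> int"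
  assumes q: "prime q" and c: "c \<noteq> 0" "multiplicity q c \<le> n"
    and inj: "\<And>y y'. y \<in> Y \<Longrightarrow> y' \<in> Y \<Longrightarrow> q^n dvd h y - h y' \<Longrightarrow> y = y'"
  shows "int (card {y \<in> Y. q^n dvd c * h y - a}) \<le> q ^ multiplicity q c"
proof (cases "{y \<in> Y. q^n dvd c * h y - a} = {}")
  case True
  show ?thesis unfolding True using prime_gt_0_int[OF q] by simp
next
  case False
  define v where "v = multiplicity q c"
  define Sol where "Sol = {y \<in> Y. q^n dvd c * h y - a}"
  obtain y0 where y0: "y0 \<in> Sol" using False Sol_def by auto
  obtain c' where c': "c = q^v * c'" "\<not> q dvd c'"
    using multiplicity_decompose'[of c q] c prime_gt_1_int[OF q] unfolding v_def by auto
  have q_pow: "q^n = q^v * q^(n - v)" using c(2) unfolding v_def by (simp flip: power_add)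
  have dvd_y0: "q^(n - v) dvd h y - h y0" if "y \<in> Sol" for y
  proof -
    have "q^n dvd (c * h y - a) - (c * h y0 - a)"
      using that y0 unfolding Sol_def by (blast intro: dvd_diff)
    then have "q^v * q^(n - v) dvd q^v * (c' * (h y - h y0))"
      unfolding q_pow c'(1) by (simp add: algebra_simps)
    then have "q^(n - v) dvd c' * (h y - h y0)" using q by simp
    moreover have "coprime (q^(n - v)) c'" using q c'(2) by (simp add: prime_imp_coprime)
    ultimately show ?thesis by (simp add: coprime_dvd_mult_right_iff)
  qed
  \<comment> \<open>the solutions agree modulo \<open>q^(n-v)\<close>, so they are told apart by a residue modulo \<open>q^v\<close>\<close>
  define w where "w y = (h y - h y0) div q^(n - v) mod q^v" for y
  have "inj_on w Sol"
  proof
    fix y y' assume y: "y \<in> Sol" "y' \<in> Sol" and "w y = w y'"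
    then have "q^v dvd (h y - h y0) div q^(n - v) - (h y' - h y0) div q^(n - v)"
      unfolding w_def by (simp add: mod_eq_dvd_iff)
    then have "q^(n - v) * q^v dvd q^(n - v) * ((h y - h y0) div q^(n - v) - (h y' - h y0) div q^(n - v))"
      by simp
    also have "\<dots> = h y - h y'"
      using dvd_y0[OF y(1)] dvd_y0[OF y(2)] by (simp add: right_diff_distrib)
    finally show "y = y'" using inj y q_pow unfolding Sol_def by (simp add: mult.commute)
  qed
  moreover have "w ` Sol \<subseteq> {0..<q^v}" unfolding w_def using prime_gt_0_int[OF q] by auto
  ultimately have "card Sol \<le> card {0..<q^v}" by (rule card_inj_on_le) simp
  then have "int (card Sol) \<le> q^v" using prime_gt_0_int[OF q] by (simp add: le_nat_iff)
  then show ?thesis unfolding Sol_def v_def .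
qed

lemma adj_mat_congruence:
  fixes M :: "'a::comm_ring_1 mat"
  assumes M: "M \<in> carrier_mat k k"
    and cong: "\<And>i. i < k \<Longrightarrow> N dvd (\<Sum>l<k. M $$ (i,l) * u l) - r i" and l: "l < k"
  shows "N dvd det M * u l - (\<Sum>i<k. adj_mat M $$ (l,i) * r i)"
proof -
  have adj_M: "(\<Sum>i<k. adj_mat M $$ (l,i) * M $$ (i,l')) = (if l = l' then det M else 0)"
    if "l' < k" for l'
  proof -
    have "(adj_mat M * M) $$ (l,l') = (if l = l' then det M else 0)"
      using adj_mat(3)[OF M] l that by simp
    then show ?thesis
      using adj_mat(1)[OF M] M l that by (simp add: scalar_prod_def atLeast0LessThan)
  qed
  have "(\<Sum>i<k. adj_mat M $$ (l,i) * ((\<Sum>l'<k. M $$ (i,l') * u l') - r i))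
          = (\<Sum>i<k. \<Sum>l'<k. adj_mat M $$ (l,i) * M $$ (i,l') * u l')
            - (\<Sum>i<k. adj_mat M $$ (l,i) * r i)"
    by (simp add: right_diff_distrib sum_subtractf sum_distrib_left mult.assoc)
  also have "(\<Sum>i<k. \<Sum>l'<k. adj_mat M $$ (l,i) * M $$ (i,l') * u l')
               = (\<Sum>l'<k. (\<Sum>i<k. adj_mat M $$ (l,i) * M $$ (i,l')) * u l')"
    by (subst sum.swap) (simp only: sum_distrib_right)
  also have "\<dots> = (\<Sum>l'<k. if l = l' then det M * u l' else 0)"
    by (intro sum.cong refl) (simp add: adj_M)
  also have "\<dots> = det M * u l" using l by simp
  finally have eq: "(\<Sum>i<k. adj_mat M $$ (l,i) * ((\<Sum>l'<k. M $$ (i,l') * u l') - r i))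
                      = det M * u l - (\<Sum>i<k. adj_mat M $$ (l,i) * r i)" .
  have "N dvd (\<Sum>i<k. adj_mat M $$ (l,i) * ((\<Sum>l'<k. M $$ (i,l') * u l') - r i))"
    using cong by (intro dvd_sum dvd_mult) auto
  then show ?thesis unfolding eq .
qed

lemma submatrix_adj_mat_congruence:
  fixes T :: "'a::comm_ring_1 mat"
  assumes T: "dim_row T = k" "F \<subseteq> {..<dim_col T}" "card F = k"
    and cong: "\<And>i. i < k \<Longrightarrow> N dvd (\<Sum>j\<in>F. T $$ (i,j) * u j) - r i" and j: "j \<in> F"
  shows "N dvd det (submatrix T {0..<k} F) * u j
                - (\<Sum>i<k. adj_mat (submatrix T {0..<k} F) $$ (card {a\<in>F. a < j}, i) * r i)"
proof -
  let ?M = "submatrix T {0..<k} F"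
  have fin: "finite F" using T(2) finite_subset by blast
  have rank_less: "card {a\<in>F. a < j'} < k" if "j' \<in> F" for j'
    unfolding T(3)[symmetric] using that fin by (intro psubset_card_mono) auto
  have dim: "card {i. i < dim_row T \<and> i \<in> {0..<k}} = k" "card {j. j < dim_col T \<and> j \<in> F} = k"
    using T by (simp_all add: Int_absorb1 Collect_conj_eq flip: lessThan_def)
  have M: "?M \<in> carrier_mat k k" by (intro carrier_matI) (simp_all only: dim_submatrix dim)
  have "(\<Sum>j\<in>F. T $$ (i,j) * u j) = (\<Sum>l<k. ?M $$ (i,l) * u (pick F l))" if "i < k" for i
  proof (rule sum.reindex_bij_witness[where i = "pick F" and j = "\<lambda>j. card {a\<in>F. a < j}"])
    fix j' assume j': "j' \<in> F"
    show "pick F (card {a\<in>F. a < j'}) = j'" using j' by (rule pick_card_in_set)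
    show "card {a\<in>F. a < j'} \<in> {..<k}" using rank_less[OF j'] by simp
    have "{a\<in>{0..<k}. a < i} = {0..<i}" using \<open>i < k\<close> by auto
    then have "?M $$ (i, card {a\<in>F. a < j'}) = T $$ (i,j')"
      using submatrix_index_card[of i T j' "{0..<k}" F] \<open>i < k\<close> T(1,2) j' by auto
    then show "?M $$ (i, card {a\<in>F. a < j'}) * u (pick F (card {a\<in>F. a < j'})) = T $$ (i,j') * u j'"
      using pick_card_in_set[OF j'] by simp
  next
    fix l assume "l \<in> {..<k}"
    then have l: "l < card F" using T(3) by simp
    show "card {a\<in>F. a < pick F l} = l" using l by (rule card_pick_le)
    show "pick F l \<in> F" using l by (rule pick_in_set_le)
  qed
  then have "N dvd det ?M * u (pick F (card {a\<in>F. a < j})) - (\<Sum>i<k. adj_mat ?M $$ (card {a\<in>F. a < j}, i) * r i)"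
    using cong rank_less[OF j] by (intro adj_mat_congruence[OF M]) auto
  then show ?thesis using pick_card_in_set[OF j] by simp
qed

lemma card_mult_le_by_fibres:
  assumes A: "finite A" and S: "S \<subseteq> A"
    and fibre_A: "\<And>a. a \<in> A \<Longrightarrow> card {a' \<in> A. g a' = g a} = N\<^sub>A"
    and fibre_S: "\<And>a. a \<in> A \<Longrightarrow> card {s \<in> S. g s = g a} \<le> N\<^sub>S"
  shows "card S * N\<^sub>A \<le> card A * N\<^sub>S"
proof -
  have S_fin: "finite S" using A S by (rule rev_finite_subset)
  have "card A = (\<Sum>t\<in>g ` A. card {a \<in> A. g a = t})"
    using sum.group[OF A finite_imageI[OF A, of g] subset_refl, of "\<lambda>_. 1::nat"] by simp
  also have "\<dots> = (\<Sum>t\<in>g ` A. N\<^sub>A)" using fibre_A by (intro sum.cong) auto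
  finally have card_A: "card A = card (g ` A) * N\<^sub>A" by simp
  have "card S = (\<Sum>t\<in>g ` A. card {s \<in> S. g s = t})"
    using sum.group[OF S_fin finite_imageI[OF A, of g] image_mono[OF S, of g], of "\<lambda>_. 1::nat"] by simp
  also have "\<dots> \<le> (\<Sum>t\<in>g ` A. N\<^sub>S)" using fibre_S by (intro sum_mono) auto
  finally have "card S \<le> card (g ` A) * N\<^sub>S" by simp
  then show ?thesis unfolding card_A by (simp add: mult.commute mult.left_commute)
qed

definition clear_slots :: "'a set \<Rightarrow> ('a \<Rightarrow> 'b) \<Rightarrow> ('a \<Rightarrow> 'b \<Rightarrow> 'c::zero) \<Rightarrow> 'a \<Rightarrow> 'b \<Rightarrow> 'c" where
  "clear_slots F z s j = (if j \<in> F then (s j)(z j := 0) else s j)"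

definition slot_values :: "'a set \<Rightarrow> ('a \<Rightarrow> 'b) \<Rightarrow> ('a \<Rightarrow> 'b \<Rightarrow> 'c) \<Rightarrow> 'a \<Rightarrow> 'c" where
  "slot_values F z s = restrict (\<lambda>j. s j (z j)) F"

lemma clear_slots_upd_slot:
  "j \<in> F \<Longrightarrow> (clear_slots F z s j)(z j := s j (z j)) = s j"
  unfolding clear_slots_def by auto

lemma inj_on_slot_values_fibre:
  "inj_on (slot_values F z) {s. clear_slots F z s = t}"
proof
  fix s s' assume "s \<in> {s. clear_slots F z s = t}" "s' \<in> {s. clear_slots F z s = t}"
    and slot_eq: "slot_values F z s = slot_values F z s'"
  then have clear_eq: "clear_slots F z s = clear_slots F z s'" by simp
  show "s = s'"
  proof
    fix j show "s j = s' j"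
    proof (cases "j \<in> F")
      case True
      have "s j (z j) = s' j (z j)" using fun_cong[OF slot_eq, of j] True unfolding slot_values_def by simp
      then show ?thesis
        using clear_slots_upd_slot[OF True, of z s] clear_slots_upd_slot[OF True, of z s'] clear_eq by metis
    next
      case False
      then show ?thesis using fun_cong[OF clear_eq, of j] unfolding clear_slots_def by simp
    qed
  qed
qed

lemma finite_words: "finite (words m)"
  unfolding words_def by (intro finite_PiE) auto

lemma finite_keys: "finite (keys m e)"
  unfolding keys_def using finite_words by (intro finite_PiE) auto

lemma words_neq_choose_index:
  assumes "\<And>j. j \<in> F \<Longrightarrow> d j \<in> words m" "\<And>j. j \<in> F \<Longrightarrow> d' j \<in> words m"
    and "\<And>j. j \<in> F \<Longrightarrow> d j \<noteq> d' j"
  obtains z where "\<And>j. j \<in> F \<Longrightarrow> z j < 2*m \<and> d j (z j) \<noteq> d' j (z j)"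
proof -
  have "\<forall>j\<in>F. \<exists>i. i < 2*m \<and> d j i \<noteq> d' j i"
  proof
    fix j assume j: "j \<in> F"
    show "\<exists>i. i < 2*m \<and> d j i \<noteq> d' j i"
    proof (rule ccontr)
      assume "\<not> (\<exists>i. i < 2*m \<and> d j i \<noteq> d' j i)"
      then have "d j = d' j" using assms(1,2)[OF j] unfolding words_def by (intro PiE_ext) auto
      then show False using assms(3)[OF j] by simp
    qed
  qed
  from bchoice[OF this] show ?thesis using that by blast
qed

lemma keys_word_range:
  assumes s: "s \<in> keys m e" and "j < e" "i < 2*m"
  shows "s j i \<in> {0..<2^32}"
proof -
  have sj: "s j \<in> words m" using PiE_mem[OF s[unfolded keys_def]] \<open>j < e\<close> by simp
  show ?thesis using PiE_mem[OF sj[unfolded words_def]] \<open>i < 2*m\<close> by simp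
qed

lemma card_keys_pos:
  "0 < card (keys m e)"
  unfolding keys_def words_def by (simp add: card_PiE)

lemma card_keys_fibre:
  assumes F: "F \<subseteq> {0..<e}" and z: "\<And>j. j \<in> F \<Longrightarrow> z j < 2*m" and s0: "s0 \<in> keys m e"
  shows "card {s \<in> keys m e. clear_slots F z s = clear_slots F z s0} = 2^(32 * card F)"
proof -
  let ?fibre = "{s \<in> keys m e. clear_slots F z s = clear_slots F z s0}"
  have "bij_betw (slot_values F z) ?fibre (F \<rightarrow>\<^sub>E {0..<(2::int)^32})"
  proof (rule bij_betw_imageI)
    show "inj_on (slot_values F z) ?fibre"
      using inj_on_slot_values_fibre by (rule inj_on_subset) auto
    show "slot_values F z ` ?fibre = F \<rightarrow>\<^sub>E {0..<(2::int)^32}"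
    proof
      show "slot_values F z ` ?fibre \<subseteq> F \<rightarrow>\<^sub>E {0..<(2::int)^32}"
        using F z unfolding slot_values_def keys_def words_def by (fastforce simp: PiE_iff)
      show "F \<rightarrow>\<^sub>E {0..<(2::int)^32} \<subseteq> slot_values F z ` ?fibre"
      proof
        fix w assume w: "w \<in> F \<rightarrow>\<^sub>E {0..<(2::int)^32}"
        define s where "s j = (if j \<in> F then (s0 j)(z j := w j) else s0 j)" for j
        have "s \<in> keys m e"
          using s0 F z w unfolding s_def keys_def words_def by (fastforce simp: PiE_iff extensional_def)
        moreover have "clear_slots F z s = clear_slots F z s0"
          unfolding clear_slots_def s_def by auto
        moreover have "slot_values F z s = w"
          using w unfolding slot_values_def s_def by (auto simp: PiE_iff extensional_def)
        ultimately show "w \<in> slot_values F z ` ?fibre" by force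
      qed
    qed
  qed
  then have "card ?fibre = card (F \<rightarrow>\<^sub>E {0..<(2::int)^32})" by (rule bij_betw_same_card)
  also have "\<dots> = 2^(32 * card F)"
    using finite_subset[OF F] by (simp add: card_PiE power_mult)
  finally show ?thesis .
qed

lemma card_slot_constrained_keys:
  assumes F: "F \<subseteq> {0..<e}" and z: "\<And>j. j \<in> F \<Longrightarrow> z j < 2*m" and S: "S \<subseteq> keys m e"
    and slots: "\<And>s j. s \<in> S \<Longrightarrow> j \<in> F \<Longrightarrow> s j (z j) \<in> Y j (clear_slots F z s)"
    and Y: "\<And>j t. j \<in> F \<Longrightarrow> finite (Y j t)" "\<And>j t. j \<in> F \<Longrightarrow> card (Y j t) \<le> B"
  shows "card S * 2^(32 * card F) \<le> card (keys m e) * B ^ card F"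
proof (rule card_mult_le_by_fibres[OF finite_keys S])
  fix s0 assume s0: "s0 \<in> keys m e"
  show "card {s \<in> keys m e. clear_slots F z s = clear_slots F z s0} = 2^(32 * card F)"
    using F z s0 by (rule card_keys_fibre)
  let ?t = "clear_slots F z s0"
  have F_fin: "finite F" using F finite_subset by blast
  have "card {s \<in> S. clear_slots F z s = ?t} \<le> card (PiE F (\<lambda>j. Y j ?t))"
  proof (rule card_inj_on_le)
    show "inj_on (slot_values F z) {s \<in> S. clear_slots F z s = ?t}"
      using inj_on_slot_values_fibre by (rule inj_on_subset) auto
    show "slot_values F z ` {s \<in> S. clear_slots F z s = ?t} \<subseteq> PiE F (\<lambda>j. Y j ?t)"
      using slots unfolding slot_values_def by fastforce
    show "finite (PiE F (\<lambda>j. Y j ?t))" using F_fin Y(1) by (intro finite_PiE) auto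
  qed
  also have "\<dots> = (\<Prod>j\<in>F. card (Y j ?t))" using F_fin by (rule card_PiE)
  also have "\<dots> \<le> (\<Prod>j\<in>F. B)" using Y(2) by (intro prod_mono) auto
  finally show "card {s \<in> S. clear_slots F z s = ?t} \<le> B ^ card F" by simp
qed

definition NH_summand :: "(nat \<Rightarrow> int) \<Rightarrow> (nat \<Rightarrow> int) \<Rightarrow> nat \<Rightarrow> int" where
  "NH_summand s d c = ((d (2*c) + s (2*c)) mod 2^32) * ((d (2*c+1) + s (2*c+1)) mod 2^32)"

definition partner :: "nat \<Rightarrow> nat" where
  "partner i = (if even i then i + 1 else i - 1)"

lemma partner_div_2 [simp]: "partner i div 2 = i div 2"
  unfolding partner_def by (auto elim: oddE)

lemma partner_less: "i < 2*m \<Longrightarrow> partner i < 2*m"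
  unfolding partner_def by auto

lemma NH_summand_upd_other:
  "c \<noteq> i div 2 \<Longrightarrow> NH_summand (\<sigma>(i := y)) d c = NH_summand \<sigma> d c"
  unfolding NH_summand_def by auto

lemma NH_summand_upd_partner:
  "NH_summand (\<sigma>(partner i := y)) d (i div 2)
     = ((d i + \<sigma> i) mod 2^32) * ((d (partner i) + y) mod 2^32)"
proof (cases "even i")
  case True
  then have "2 * (i div 2) = i" "partner i = i + 1" unfolding partner_def by auto
  then show ?thesis unfolding NH_summand_def by simp
next
  case False
  then have "2 * (i div 2) = partner i" "partner i + 1 = i" unfolding partner_def by (auto elim: oddE)
  then show ?thesis unfolding NH_summand_def by (simp add: mult.commute)
qed

lemma NH_upd_partner:
  assumes "i < 2*m"
  shows "NH m (\<sigma>(partner i := y)) d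
           = ((\<Sum>c\<in>{..<m} - {i div 2}. NH_summand \<sigma> d c)
              + ((d i + \<sigma> i) mod 2^32) * ((d (partner i) + y) mod 2^32)) mod 2^64"
proof -
  have "(\<Sum>c<m. NH_summand (\<sigma>(partner i := y)) d c)
          = NH_summand (\<sigma>(partner i := y)) d (i div 2)
            + (\<Sum>c\<in>{..<m} - {i div 2}. NH_summand (\<sigma>(partner i := y)) d c)"
    using assms by (intro sum.remove) auto
  also have "(\<Sum>c\<in>{..<m} - {i div 2}. NH_summand (\<sigma>(partner i := y)) d c)
               = (\<Sum>c\<in>{..<m} - {i div 2}. NH_summand \<sigma> d c)"
    by (intro sum.cong refl NH_summand_upd_other) simp
  finally have "(\<Sum>c<m. NH_summand (\<sigma>(partner i := y)) d c)
      = (\<Sum>c\<in>{..<m} - {i div 2}. NH_summand \<sigma> d c)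
        + ((d i + \<sigma> i) mod 2^32) * ((d (partner i) + y) mod 2^32)"
    unfolding NH_summand_upd_partner by (simp only: add.commute)
  then show ?thesis unfolding NH_def NH_summand_def[symmetric] by simp
qed

lemma NH_diff_inj_partner:
  assumes d: "d \<in> words m" "d' \<in> words m" and i: "i < 2*m" "d i \<noteq> d' i"
    and y: "y \<in> {0..<2^32}" "y' \<in> {0..<2^32}"
    and dvd: "(2::int)^64 dvd (NH m (\<sigma>(partner i := y)) d - NH m (\<sigma>(partner i := y)) d')
                             - (NH m (\<sigma>(partner i := y')) d - NH m (\<sigma>(partner i := y')) d')"
  shows "y = y'"
proof (rule weighted_shift_diff_inj_mod_square)
  let ?W = "2^32 :: int"
  have range: "d i \<in> {0..<?W}" "d' i \<in> {0..<?W}"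
    using d i unfolding words_def by auto
  show "(d i + \<sigma> i) mod ?W \<noteq> (d' i + \<sigma> i) mod ?W"
  proof
    assume "(d i + \<sigma> i) mod ?W = (d' i + \<sigma> i) mod ?W"
    then have "d i mod ?W = d' i mod ?W" by (simp add: mod_eq_dvd_iff)
    then show False using range i by simp
  qed
  define R where "R d = (\<Sum>c\<in>{..<m} - {i div 2}. NH_summand \<sigma> d c)" for d
  have "(2::int)^64 dvd (R d + (d i + \<sigma> i) mod ?W * ((d (partner i) + y) mod ?W)
                        - (R d' + (d' i + \<sigma> i) mod ?W * ((d' (partner i) + y) mod ?W)))
                     - (R d + (d i + \<sigma> i) mod ?W * ((d (partner i) + y') mod ?W)
                        - (R d' + (d' i + \<sigma> i) mod ?W * ((d' (partner i) + y') mod ?W)))"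
    by (rule dvd_diff_diff_of_mod[OF dvd[unfolded NH_upd_partner[OF i(1)] R_def[symmetric]]])
  then show "?W^2 dvd ((d i + \<sigma> i) mod ?W * ((d (partner i) + y) mod ?W)
                       - (d' i + \<sigma> i) mod ?W * ((d' (partner i) + y) mod ?W))
                    - ((d i + \<sigma> i) mod ?W * ((d (partner i) + y') mod ?W)
                       - (d' i + \<sigma> i) mod ?W * ((d' (partner i) + y') mod ?W))"
    by (simp add: algebra_simps)
qed (use y in auto)

lemma card_NH_diff_solutions_le:
  fixes c a :: int
  assumes d: "d \<in> words m" "d' \<in> words m" and i: "i < 2*m" "d i \<noteq> d' i"
    and c: "c \<noteq> 0" "multiplicity 2 c \<le> 64"
  shows "card {y \<in> {0..<2^32}. 2^64 dvd
           c * (NH m (\<sigma>(partner i := y)) d - NH m (\<sigma>(partner i := y)) d') - a}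
         \<le> 2 ^ multiplicity 2 c"
proof -
  define h where "h y = NH m (\<sigma>(partner i := y)) d - NH m (\<sigma>(partner i := y)) d'" for y
  have inj: "y = y'" if "y \<in> {0..<2^32}" "y' \<in> {0..<2^32}" "(2::int)^64 dvd h y - h y'" for y y'
    using that unfolding h_def by (rule NH_diff_inj_partner[OF d i])
  have "int (card {y \<in> {0..<2^32}. 2^64 dvd c * h y - a}) \<le> 2 ^ multiplicity 2 c"
    by (rule card_solutions_dvd_mult_le[OF two_is_prime c inj])
  then have "int (card {y \<in> {0..<2^32}. 2^64 dvd c * h y - a}) \<le> int (2 ^ multiplicity 2 c)"
    by (simp only: of_nat_power of_nat_numeral)
  then show ?thesis unfolding h_def by (simp only: of_nat_le_iff)
qed

lemma EHC_diff_dvd: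
  assumes T: "dim_col T = e" and F: "F \<subseteq> {..<e}"
    and \<delta>: "(EHC m T J s x i - EHC m T J s y i) mod 2^64 = \<delta> i"
  shows "(2::int)^64 dvd (\<Sum>j\<in>F. T $$ (i,j) * (NH m (s j) (J x j) - NH m (s j) (J y j)))
           - (\<delta> i - (\<Sum>j\<in>{..<e} - F. T $$ (i,j) * (NH m (s j) (J x j) - NH m (s j) (J y j))))"
proof -
  define D where "D j = T $$ (i,j) * (NH m (s j) (J x j) - NH m (s j) (J y j))" for j
  have "\<delta> i = (\<Sum>j<e. D j) mod 2^64"
    using \<delta> unfolding EHC_def T D_def by (simp add: mod_diff_eq sum_subtractf right_diff_distrib)
  then have "(2::int)^64 dvd (\<Sum>j<e. D j) - \<delta> i" by simp
  moreover have "(\<Sum>j<e. D j) = (\<Sum>j\<in>{..<e} - F. D j) + (\<Sum>j\<in>F. D j)"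
    using sum.subset_diff[OF F] by simp
  ultimately have "(2::int)^64 dvd (\<Sum>j\<in>F. D j) - (\<delta> i - (\<Sum>j\<in>{..<e} - F. D j))"
    by (simp add: algebra_simps)
  then show ?thesis unfolding D_def .
qed

lemma EHC_delta_slot_congruence:
  assumes T: "dim_row T = k" "dim_col T = e" and F: "F \<subseteq> {..<e}" "card F = k" "j \<in> F"
    and s: "\<forall>i<k. (EHC m T J s x i - EHC m T J s y i) mod 2^64 = \<delta> i"
  shows "(2::int)^64 dvd det (submatrix T {0..<k} F) * (NH m (s j) (J x j) - NH m (s j) (J y j))
           - (\<Sum>i<k. adj_mat (submatrix T {0..<k} F) $$ (card {a\<in>F. a < j}, i)
                * (\<delta> i - (\<Sum>j'\<in>{..<e} - F. T $$ (i,j') * (NH m (s j') (J x j') - NH m (s j') (J y j')))))"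
  using T F s by (intro submatrix_adj_mat_congruence EHC_diff_dvd) auto

lemma card_EHC_delta_keys_le:
  fixes \<delta> :: "nat \<Rightarrow> int"
  assumes J: "\<And>j. j \<in> F \<Longrightarrow> J x j \<in> words m" "\<And>j. j \<in> F \<Longrightarrow> J y j \<in> words m"
    and F: "F \<subseteq> {0..<e}" "card F = k" "\<And>j. j \<in> F \<Longrightarrow> J x j \<noteq> J y j"
    and T: "dim_row T = k" "dim_col T = e" "\<not> (2::int)^64 dvd det (submatrix T {0..<k} F)"
  shows "card {s \<in> keys m e. \<forall>i<k. (EHC m T J s x i - EHC m T J s y i) mod 2^64 = \<delta> i}
           * 2^(32 * k)
         \<le> card (keys m e) * 2^(k * multiplicity 2 (det (submatrix T {0..<k} F)))"
proof -
  define M where "M = submatrix T {0..<k} F"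
  define v where "v = multiplicity 2 (det M)"
  define S where "S = {s \<in> keys m e. \<forall>i<k. (EHC m T J s x i - EHC m T J s y i) mod 2^64 = \<delta> i}"
  obtain z0 where z0: "\<And>j. j \<in> F \<Longrightarrow> z0 j < 2*m \<and> J x j (z0 j) \<noteq> J y j (z0 j)"
    using words_neq_choose_index[of F "J x" m "J y"] J F(3) by blast
  define z where "z j = partner (z0 j)" for j
  have z: "z j < 2*m" if "j \<in> F" for j using z0[OF that] partner_less unfolding z_def by blast
  define hh where "hh j \<sigma> = NH m \<sigma> (J x j) - NH m \<sigma> (J y j)" for j \<sigma>
  define a where "a j t = (\<Sum>i<k. adj_mat M $$ (card {a\<in>F. a < j}, i)
                     * (\<delta> i - (\<Sum>j'\<in>{..<e} - F. T $$ (i,j') * hh j' (t j'))))" for j t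
  define Y where "Y j t = {y \<in> {0..<2^32}. 2^64 dvd det M * hh j ((t j)(z j := y)) - a j t}" for j t
  have "det M \<noteq> 0" using T(3) unfolding M_def by auto
  have "\<not> 64 \<le> v" using T(3) multiplicity_dvd'[of 64 2 "det M"] unfolding M_def v_def by blast
  then have "v \<le> 64" by simp
  have "card S * 2^(32 * card F) \<le> card (keys m e) * (2^v) ^ card F"
  proof (rule card_slot_constrained_keys[OF F(1) z])
    show "S \<subseteq> keys m e" unfolding S_def by blast
    show "finite (Y j t)" for j t
      unfolding Y_def by (rule rev_finite_subset[OF finite_atLeastLessThan_int]) auto
    show "card (Y j t) \<le> 2^v" if "j \<in> F" for j t
      unfolding Y_def hh_def v_def z_def
      by (rule card_NH_diff_solutions_le[OF J[OF that] z0[OF that, THEN conjunct1]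
            z0[OF that, THEN conjunct2] \<open>det M \<noteq> 0\<close> \<open>v \<le> 64\<close>[unfolded v_def]])
    show "s j (z j) \<in> Y j (clear_slots F z s)" if s: "s \<in> S" and j: "j \<in> F" for s j
    proof -
      have "2^64 dvd det M * hh j (s j) - a j s"
        using s F(1) unfolding S_def M_def hh_def a_def
        by (intro EHC_delta_slot_congruence[OF T(1,2) _ F(2) j]) auto
      moreover have "a j (clear_slots F z s) = a j s" unfolding a_def clear_slots_def by simp
      moreover have "(clear_slots F z s j)(z j := s j (z j)) = s j" using j by (rule clear_slots_upd_slot)
      moreover have "s j (z j) \<in> {0..<2^32}"
        using s j F(1) z[OF j] unfolding S_def by (intro keys_word_range) auto
      ultimately show ?thesis unfolding Y_def by simp
    qed
  qed
  then show ?thesis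
    unfolding S_def M_def v_def F(2) by (simp add: power_mult[symmetric] mult.commute)
qed

lemma real_ratio_le_powr:
  fixes S N k v p :: nat
  assumes le: "S * 2^(32 * k) \<le> N * 2^(k * v)" and N: "0 < N" and v: "v \<le> p"
  shows "real S / real N \<le> 2 powr (real k * (real p - 32))"
proof -
  have "real (S * 2^(32 * k)) \<le> real (N * 2^(k * v))" using le by (simp only: of_nat_le_iff)
  then have "real S * 2^(32 * k) \<le> real N * 2^(k * v)"
    by (simp only: of_nat_mult of_nat_power of_nat_numeral)
  then have "real S / real N \<le> 2^(k * v) / 2^(32 * k)"
    using N by (simp add: divide_le_eq le_divide_eq mult.commute)
  also have "\<dots> = 2 powr real (k * v) / 2 powr real (32 * k)"
    by (simp only: powr_realpow zero_less_numeral)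
  also have "\<dots> = 2 powr (real k * (real v - 32))"
    by (simp only: powr_diff[symmetric] of_nat_mult of_nat_numeral right_diff_distrib mult.commute)
  also have "\<dots> \<le> 2 powr (real k * (real p - 32))" using v by (intro powr_mono mult_left_mono) auto
  finally show ?thesis .
qed

theorem mainTheorem2:
  fixes D :: "'d set" and m e k p :: nat
    and J :: "'d \<Rightarrow> nat \<Rightarrow> nat \<Rightarrow> int" and T :: "int mat"
    and x y :: 'd and \<delta> :: "nat \<Rightarrow> int"
  assumes "m \<ge> 1" and "k \<ge> 1" and "e \<ge> k"
    and J_range: "\<And>z i. z \<in> D \<Longrightarrow> i < e \<Longrightarrow> J z i \<in> words m"
    and J_dist: "\<And>z w. z \<in> D \<Longrightarrow> w \<in> D \<Longrightarrow> z \<noteq> w \<Longrightarrow>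
                   card {i \<in> {0..<e}. J z i \<noteq> J w i} \<ge> k"
    and T_dim: "dim_row T = k" "dim_col T = e"
    and T_det: "\<And>F. F \<subseteq> {0..<e} \<Longrightarrow> card F = k \<Longrightarrow>
                   \<not> (2::int)^64 dvd det (submatrix T {0..<k} F)"
    and p_def: "p = Max {multiplicity (2::int) (det (submatrix T {0..<k} F)) | F.
                          F \<subseteq> {0..<e} \<and> card F = k}"
    and "x \<in> D" "y \<in> D" "x \<noteq> y"
    and \<delta>_range: "\<And>i. i < k \<Longrightarrow> \<delta> i \<in> {0..<(2::int)^64}"
  shows "real (card {s \<in> keys m e. \<forall>i<k. (EHC m T J s x i - EHC m T J s y i) mod 2^64 = \<delta> i})
           / real (card (keys m e))
         \<le> 2 powr (real k * (real p - 32))"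
proof -
  obtain F where F: "F \<subseteq> {i \<in> {0..<e}. J x i \<noteq> J y i}" "card F = k"
    using obtain_subset_with_card_n[OF J_dist[OF \<open>x \<in> D\<close> \<open>y \<in> D\<close> \<open>x \<noteq> y\<close>]] by blast
  have F_e: "F \<subseteq> {0..<e}" using F by auto
  let ?v = "multiplicity (2::int) (det (submatrix T {0..<k} F))"
  have count: "card {s \<in> keys m e. \<forall>i<k. (EHC m T J s x i - EHC m T J s y i) mod 2^64 = \<delta> i}
                 * 2^(32 * k) \<le> card (keys m e) * 2^(k * ?v)"
    using F F_e J_range \<open>x \<in> D\<close> \<open>y \<in> D\<close> T_dim T_det[OF F_e F(2)]
    by (intro card_EHC_delta_keys_le) auto
  have "?v \<le> p" unfolding p_def using F_e F(2) by (intro Max_ge) auto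
  show ?thesis by (rule real_ratio_le_powr[OF count card_keys_pos \<open>?v \<le> p\<close>])
qed

end
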